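(* Let $\bar L$ and $K$ be positive integers with $K\le \bar L/2$. Consider the following procedure producing, for $n=1,\dots,K$, a list of $n$ positive integers $L^{(n)}_1\le\cdots\le L^{(n)}_n$ (sorted ascending). For $n=1$: $L^{(1)}_1=2^{\lfloor\log_2\bar L\rfloor}$. For $n\ge2$: let $r^{(n-1)}=\bar L-\sum_{k=1}^{n-1}L^{(n-1)}_k$. If $r^{(n-1)}\ge L^{(n-1)}_{n-1}/2$, keep all previous lengths and add a new length $2^{\lfloor\log_2 r^{(n-1)}\rfloor}$; otherwise replace the largest length $L^{(n-1)}_{n-1}$ by two lengths each equal to $L^{(n-1)}_{n-1}/2$, keeping the others. Then sort the resulting $n$ lengths ascending to obtain $L^{(n)}_1\le\dots\le L^{(n)}_n$. Then the final lengths $L_k=L^{(K)}_k$, $k=1,\dots,K$, are all powers of $2$, satisfy $\sum_{k=1}^K L_k\le\bar L$, and maximize $\sum_{k=1}^K\lfloor\log_2 L_k\rfloor$ over all $K$-tuples of positive integers $(L_1,\dots,L_K)$ with $\sum_{k=1}^K L_k\le\bar L$.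
   Context: This procedure partitions (a truncation of) a dictionary matrix with $\bar L$ columns into $K$ subblocks of sizes $L_1,\dots,L_K$; in subblock sparse coding, the number of bits carried by the support is $\sum_{k=1}^K\lfloor\log_2 L_k\rfloor$. *)

theory Defs
  imports Complex_Main
begin

definition flog2 :: "nat \<Rightarrow> nat" where
  "flog2 x = nat \<lfloor>log 2 (real x)\<rfloor>"

definition subblock_step :: "nat \<Rightarrow> nat list \<Rightarrow> nat list" where
  "subblock_step Lbar Ls =
     (let r = Lbar - sum_list Ls; M = last Ls in
      if 2 * r \<ge> M then sort (Ls @ [2 ^ flog2 r])
      else sort (butlast Ls @ [M div 2, M div 2]))"

fun subblock_lengths :: "nat \<Rightarrow> nat \<Rightarrow> nat list" where
  "subblock_lengths Lbar 0 = []"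
| "subblock_lengths Lbar (Suc 0) = [2 ^ flog2 Lbar]"
| "subblock_lengths Lbar (Suc (Suc n)) = subblock_step Lbar (subblock_lengths Lbar (Suc n))"

end

theory Submission
  imports Defs
begin

text \<open>Throughout the procedure the current lengths are all equal to \<open>2^e\<close> or \<open>2^(e+1)\<close> for a
  single exponent \<open>e\<close>, and the unused part \<open>Lbar - \<Sum>L\<^sub>k\<close> stays below \<open>2^e\<close>: appending
  \<open>2^\<lfloor>log\<^sub>2 r\<rfloor>\<close> or halving the largest length re-establishes this, possibly with \<open>e\<close> lowered
  by one. Such a list is optimal. For any positive \<open>x\<close> and any \<open>e\<close> one has
  \<open>\<lfloor>log\<^sub>2 x\<rfloor> + 1 \<le> e + \<lfloor>x / 2^e\<rfloor>\<close>, so every admissible \<open>K\<close>-tuple has value at most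
  \<open>K e + \<lfloor>Lbar / 2^e\<rfloor> - K\<close>; for lengths \<open>2^e\<close> and \<open>2^(e+1)\<close> the inequality is an equality,
  and a remainder below \<open>2^e\<close> does not change \<open>\<lfloor>Lbar / 2^e\<rfloor>\<close>.\<close>

lemma flog2_eqI: "2 ^ n \<le> x \<Longrightarrow> x < 2 ^ Suc n \<Longrightarrow> flog2 x = n"
  unfolding flog2_def using floor_log_nat_eq_if[of 2 n x] by simp

lemma flog2_bounds:
  assumes "0 < x"
  shows "2 ^ flog2 x \<le> x \<and> x < 2 ^ Suc (flog2 x)"
proof -
  obtain n where "2 ^ n \<le> x" "x < 2 ^ Suc n"
    using ex_power_ivl1[of 2 x] assms by auto
  then show ?thesis
    using flog2_eqI[of n x] by simp
qed

lemma flog2_power [simp]: "flog2 (2 ^ n) = n"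
  by (rule flog2_eqI) auto

lemma Suc_flog2_le_add_div:
  assumes "0 < x"
  shows "Suc (flog2 x) \<le> e + x div 2 ^ e"
proof (cases "flog2 x < e")
  case False
  define f where "f = flog2 x"
  have "2 ^ (f - e) = (2::nat) ^ f div 2 ^ e"
    using False f_def by (simp add: power_diff)
  also have "\<dots> \<le> x div 2 ^ e"
    using flog2_bounds[OF assms] f_def by (simp add: div_le_mono)
  finally show ?thesis
    using less_exp[of "f - e"] False f_def by linarith
qed simp

lemma Suc_flog2_eq_add_div:
  "x = 2 ^ e \<or> x = 2 ^ Suc e \<Longrightarrow> Suc (flog2 x) = e + x div 2 ^ e"
  using flog2_power[of "Suc e"] by auto

lemma sum_div_le: "finite A \<Longrightarrow> (\<Sum>k\<in>A. g k div d) \<le> (\<Sum>k\<in>A. g k) div (d::nat)"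
proof (induction A rule: finite_induct)
  case (insert a A)
  then show ?case
    using div_add1_eq[of "g a" "\<Sum>k\<in>A. g k" d] by simp
qed simp

lemma sum_flog2_le:
  assumes "finite A" and "\<forall>k\<in>A. 0 < L k" and "sum L A \<le> Lbar"
  shows "(\<Sum>k\<in>A. flog2 (L k)) + card A \<le> card A * e + Lbar div 2 ^ e"
proof -
  have "(\<Sum>k\<in>A. flog2 (L k)) + card A = (\<Sum>k\<in>A. Suc (flog2 (L k)))"
    by (simp add: sum_Suc)
  also have "\<dots> \<le> (\<Sum>k\<in>A. e + L k div 2 ^ e)"
    using assms(2) Suc_flog2_le_add_div by (intro sum_mono) auto
  also have "\<dots> = card A * e + (\<Sum>k\<in>A. L k div 2 ^ e)"
    by (simp add: sum.distrib)
  also have "\<dots> \<le> card A * e + Lbar div 2 ^ e"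
    using sum_div_le[OF assms(1), of L "2 ^ e"] div_le_mono[OF assms(3), of "2 ^ e"] by simp
  finally show ?thesis .
qed

definition dyadic_packing :: "nat \<Rightarrow> nat \<Rightarrow> nat list \<Rightarrow> bool" where
  "dyadic_packing Lbar e Ls \<longleftrightarrow>
     (\<forall>x\<in>set Ls. x = 2 ^ e \<or> x = 2 ^ Suc e) \<and> sum_list Ls \<le> Lbar \<and> Lbar - sum_list Ls < 2 ^ e"

lemma dyadic_packing_sum_flog2:
  assumes "dyadic_packing Lbar e Ls"
  shows "sum_list (map flog2 Ls) + length Ls = length Ls * e + Lbar div 2 ^ e"
proof -
  define q where "q = sum_list (map (\<lambda>x. x div 2 ^ e) Ls)"
  define r where "r = Lbar - sum_list Ls"
  have powers: "\<forall>x\<in>set Ls. x = 2 ^ e \<or> x = 2 ^ Suc e" and "sum_list Ls \<le> Lbar" and "r < 2 ^ e"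
    using assms unfolding dyadic_packing_def r_def by blast+
  have "sum_list Ls = sum_list (map (\<lambda>x. x div 2 ^ e * 2 ^ e) Ls)"
    using powers by (intro arg_cong[where f = sum_list] map_idI[symmetric]) auto
  then have "Lbar = q * 2 ^ e + r"
    using \<open>sum_list Ls \<le> Lbar\<close> unfolding q_def r_def by (simp add: sum_list_mult_const)
  then have "Lbar div 2 ^ e = q"
    using \<open>r < 2 ^ e\<close> by simp
  moreover have "sum_list (map flog2 Ls) + length Ls = sum_list (map (\<lambda>x. Suc (flog2 x)) Ls)"
    by (induction Ls) auto
  moreover have "\<dots> = sum_list (map (\<lambda>x. e + x div 2 ^ e) Ls)"
    using powers Suc_flog2_eq_add_div by (intro arg_cong[where f = sum_list] map_cong) auto
  moreover have "\<dots> = length Ls * e + q"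
    unfolding q_def by (induction Ls) auto
  ultimately show ?thesis by simp
qed

lemma sorted_le_last: "sorted xs \<Longrightarrow> x \<in> set xs \<Longrightarrow> x \<le> last xs"
  by (induction xs rule: induct_list012) auto

lemma sum_list_insort: "sum_list (insort x xs) = x + sum_list (xs :: nat list)"
  by (induction xs) auto

lemma sum_list_sort: "sum_list (sort xs) = sum_list (xs :: nat list)"
  by (induction xs) (auto simp: sum_list_insort)

lemma dyadic_packing_uniform:
  assumes "dyadic_packing Lbar e Ls" and "sorted Ls" and "last Ls = 2 ^ e"
  shows "\<forall>x\<in>set Ls. x = 2 ^ e"
  using assms sorted_le_last unfolding dyadic_packing_def by fastforce

lemma dyadic_packing_step_append:
  assumes P: "dyadic_packing Lbar e Ls" and "Ls \<noteq> []" and "sorted Ls"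
    and big: "last Ls \<le> 2 * (Lbar - sum_list Ls)"
  shows "dyadic_packing Lbar (e - 1) (subblock_step Lbar Ls)"
proof -
  define r where "r = Lbar - sum_list Ls"
  have "last Ls \<in> set Ls" and "r < 2 ^ e"
    using P \<open>Ls \<noteq> []\<close> unfolding dyadic_packing_def r_def by auto
  then have last: "last Ls = 2 ^ e"
    using P big unfolding dyadic_packing_def r_def by fastforce
  then obtain d where e: "e = Suc d"
    using big \<open>r < 2 ^ e\<close> unfolding r_def by (cases e) auto
  have "2 ^ d \<le> r" and "r < 2 ^ Suc d"
    using big last \<open>r < 2 ^ e\<close> unfolding r_def e by auto
  then have "subblock_step Lbar Ls = sort (Ls @ [2 ^ d])"
    using big flog2_eqI unfolding subblock_step_def r_def by (simp add: Let_def)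
  moreover have "\<forall>x\<in>set Ls. x = 2 ^ Suc d"
    using dyadic_packing_uniform[OF P \<open>sorted Ls\<close> last] e by simp
  ultimately show ?thesis
    using \<open>2 ^ d \<le> r\<close> \<open>r < 2 ^ Suc d\<close> unfolding dyadic_packing_def r_def e
    by (auto simp: sum_list_sort)
qed

lemma dyadic_packing_step_split:
  assumes P: "dyadic_packing Lbar e Ls" and "Ls \<noteq> []" and "sorted Ls"
    and "length Ls < Lbar" and small: "2 * (Lbar - sum_list Ls) < last Ls"
  shows "\<exists>e'. dyadic_packing Lbar e' (subblock_step Lbar Ls)"
proof -
  define M where "M = last Ls"
  have Ls: "Ls = butlast Ls @ [M]"
    using \<open>Ls \<noteq> []\<close> unfolding M_def by simp
  have step: "subblock_step Lbar Ls = sort (butlast Ls @ [M div 2, M div 2])"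
    using small unfolding subblock_step_def M_def by (simp add: Let_def)
  have sum: "sum_list (subblock_step Lbar Ls) = sum_list (butlast Ls) + 2 * (M div 2)"
    unfolding step by (simp add: sum_list_sort)
  have butlast: "set (butlast Ls) \<subseteq> set Ls"
    by (simp add: in_set_butlastD subsetI)
  have "M \<in> set Ls"
    using \<open>Ls \<noteq> []\<close> unfolding M_def by simp
  then consider "M = 2 ^ Suc e" | "M = 2 ^ e"
    using P unfolding dyadic_packing_def by blast
  then show ?thesis
  proof cases
    case 1
    have "dyadic_packing Lbar e (subblock_step Lbar Ls)"
      using P butlast 1 unfolding dyadic_packing_def sum
      by (subst (asm) (1 2) Ls) (auto simp: step)
    then show ?thesis ..
  next
    case 2
    have uniform: "\<forall>x\<in>set Ls. x = 2 ^ e"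
      using dyadic_packing_uniform[OF P \<open>sorted Ls\<close>] 2 unfolding M_def by simp
    obtain d where e: "e = Suc d"
    proof (cases e)
      case 0
      then have "sum_list Ls = length Ls"
        using uniform by (induction Ls) auto
      then show ?thesis
        using small 2 0 \<open>length Ls < Lbar\<close> unfolding M_def by simp
    next
      case (Suc d)
      then show ?thesis by (rule that)
    qed
    have "dyadic_packing Lbar d (subblock_step Lbar Ls)"
      using P butlast uniform small 2 unfolding dyadic_packing_def sum M_def e
      by (subst (asm) (1 2 3) Ls) (auto simp: step M_def)
    then show ?thesis ..
  qed
qed

lemma dyadic_packing_subblock_step:
  assumes "dyadic_packing Lbar e Ls" and "Ls \<noteq> []" and "sorted Ls" and "length Ls < Lbar"
  shows "\<exists>e'. dyadic_packing Lbar e' (subblock_step Lbar Ls)"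
proof (cases "last Ls \<le> 2 * (Lbar - sum_list Ls)")
  case True
  then show ?thesis
    using dyadic_packing_step_append assms by blast
next
  case False
  then show ?thesis
    using dyadic_packing_step_split assms by simp
qed

lemma length_subblock_step: "Ls \<noteq> [] \<Longrightarrow> length (subblock_step Lbar Ls) = Suc (length Ls)"
  by (simp add: subblock_step_def Let_def)

lemma sorted_subblock_step: "sorted (subblock_step Lbar Ls)"
  by (simp add: subblock_step_def Let_def)

lemma subblock_lengths_dyadic_packing:
  assumes "0 < n" and "n \<le> Lbar"
  shows "length (subblock_lengths Lbar n) = n \<and> sorted (subblock_lengths Lbar n)
    \<and> (\<exists>e. dyadic_packing Lbar e (subblock_lengths Lbar n))"
  using assms
proof (induction n rule: subblock_lengths.induct)
  case (2 Lbar)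
  then have "dyadic_packing Lbar (flog2 Lbar) [2 ^ flog2 Lbar]"
    using flog2_bounds[of Lbar] unfolding dyadic_packing_def by auto
  then show ?case by auto
next
  case (3 Lbar n)
  define Ls where "Ls = subblock_lengths Lbar (Suc n)"
  obtain e where len: "length Ls = Suc n" and "sorted Ls" and "dyadic_packing Lbar e Ls"
    using 3 unfolding Ls_def by auto
  moreover have "Ls \<noteq> []" and "length Ls < Lbar"
    using len 3(3) by auto
  ultimately show ?case
    using dyadic_packing_subblock_step length_subblock_step sorted_subblock_step
    unfolding Ls_def by simp
qed simp

theorem mainTheorem2:
  fixes Lbar K :: nat
  assumes "0 < Lbar" and "0 < K" and "2 * K \<le> Lbar"
  defines "Ls \<equiv> subblock_lengths Lbar K"
  shows "length Ls = K
    \<and> (\<forall>k<K. \<exists>j. Ls ! k = 2 ^ j)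
    \<and> sum_list Ls \<le> Lbar
    \<and> (\<forall>L :: nat \<Rightarrow> nat. (\<forall>k\<in>{1..K}. 0 < L k) \<and> (\<Sum>k=1..K. L k) \<le> Lbar
          \<longrightarrow> (\<Sum>k=1..K. flog2 (L k)) \<le> (\<Sum>k<K. flog2 (Ls ! k)))"
proof -
  obtain e where len: "length Ls = K" and P: "dyadic_packing Lbar e Ls"
    using subblock_lengths_dyadic_packing[of K Lbar] assms unfolding Ls_def by auto
  have powers: "\<forall>k<K. \<exists>j. Ls ! k = 2 ^ j"
    using P len nth_mem unfolding dyadic_packing_def by blast
  have attained: "(\<Sum>k<K. flog2 (Ls ! k)) + K = K * e + Lbar div 2 ^ e"
    using dyadic_packing_sum_flog2[OF P] len sum_list_sum_nth[of "map flog2 Ls"]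
    by (simp add: atLeast0LessThan)
  have "(\<Sum>k=1..K. flog2 (L k)) \<le> (\<Sum>k<K. flog2 (Ls ! k))"
    if "\<forall>k\<in>{1..K}. 0 < L k" and "(\<Sum>k=1..K. L k) \<le> Lbar" for L
    using sum_flog2_le[of "{1..K}" L Lbar e] that attained by simp
  then show ?thesis
    using len powers P unfolding dyadic_packing_def by blast
qed

end
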